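(* Let $N$ be a simply connected $2$-step nilpotent Lie group with Lie algebra $\mathfrak n$ and a left-invariant Lorentzian metric $\langle\cdot,\cdot\rangle$ of $pH$-type whose center $\mathfrak Z$ is positive definite, and let $\mathfrak E=\mathfrak Z^{\perp}$ (which then contains the timelike direction). Then $\dim\mathfrak Z+1\le\dim\mathfrak E$.
   Context: For $y\in\mathfrak n$ let $J_y$ be defined by $\langle J_y x,w\rangle=\langle y,[x,w]\rangle$ for all $x,w$. Here $\mathfrak n=\mathfrak Z\oplus\mathfrak E$ orthogonally; choose orthonormal bases $\{z_\alpha\}$ of $\mathfrak Z$, $\{e_a\}$ of $\mathfrak E$, $\varepsilon_\alpha=\langle z_\alpha,z_\alpha\rangle$, $\bar\varepsilon_a=\langle e_a,e_a\rangle$. The involution $\iota$ is given by $\iota z_\alpha=\varepsilon_\alpha z_\alpha$, $\iota e_a=\bar\varepsilon_a e_a$, and $j(y)=\iota\circ J_{\iota y}$. The metric is of $pH$-type if $j(z)^2=-\langle z,\iota z\rangle I$ (on $\mathfrak E$) for all $z$ in the center. *)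

theory Defs
  imports "HOL-Analysis.Analysis"
begin

text \<open>A finite-dimensional real Lie algebra is modelled as a type of class
euclidean_space (used only as a finite-dimensional real vector space; its own
inner product plays no role) with a bilinear bracket.\<close>

definition lie_algebra :: "('a::euclidean_space \<Rightarrow> 'a \<Rightarrow> 'a) \<Rightarrow> bool" where
  "lie_algebra br \<longleftrightarrow> bilinear br \<and> (\<forall>x. br x x = 0) \<and>
     (\<forall>x y z. br x (br y z) + br y (br z x) + br z (br x y) = 0)"

definition two_step_nilpotent :: "('a::euclidean_space \<Rightarrow> 'a \<Rightarrow> 'a) \<Rightarrow> bool" where
  "two_step_nilpotent br \<longleftrightarrow> (\<forall>x y z. br x (br y z) = 0) \<and> (\<exists>x y. br x y \<noteq> 0)"

definition center :: "('a::euclidean_space \<Rightarrow> 'a \<Rightarrow> 'a) \<Rightarrow> 'a set" where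
  "center br = {x. \<forall>y. br x y = 0}"

text \<open>Lorentzian scalar product: symmetric bilinear form with a timelike vector t
such that g is positive definite on the g-orthogonal complement of t
(equivalently: nondegenerate of index 1).\<close>
definition lorentzian :: "('a::euclidean_space \<Rightarrow> 'a \<Rightarrow> real) \<Rightarrow> bool" where
  "lorentzian g \<longleftrightarrow> bilinear g \<and> (\<forall>x y. g x y = g y x) \<and>
     (\<exists>t. g t t < 0 \<and> (\<forall>x. g t x = 0 \<longrightarrow> x \<noteq> 0 \<longrightarrow> g x x > 0))"

definition orth_compl :: "('a \<Rightarrow> 'a \<Rightarrow> real) \<Rightarrow> 'a set \<Rightarrow> 'a set" where
  "orth_compl g S = {x. \<forall>z\<in>S. g x z = 0}"

definition Jmap :: "('a \<Rightarrow> 'a \<Rightarrow> real) \<Rightarrow> ('a \<Rightarrow> 'a \<Rightarrow> 'a) \<Rightarrow> 'a \<Rightarrow> 'a \<Rightarrow> 'a" where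
  "Jmap g br y x = (THE v. \<forall>w. g v w = g y (br x w))"

definition adapted_orthonormal_basis ::
  "('a::euclidean_space \<Rightarrow> 'a \<Rightarrow> real) \<Rightarrow> 'a set \<Rightarrow> 'a set \<Rightarrow> 'a set \<Rightarrow> bool" where
  "adapted_orthonormal_basis g Z E B \<longleftrightarrow> finite B \<and> independent B \<and> span B = UNIV \<and>
     (\<forall>b\<in>B. g b b = 1 \<or> g b b = -1) \<and>
     (\<forall>b\<in>B. \<forall>c\<in>B. b \<noteq> c \<longrightarrow> g b c = 0) \<and>
     (\<forall>b\<in>B. b \<in> Z \<or> b \<in> E)"

text \<open>The involution iota: iota b = g(b,b) b for b in B, extended linearly;
explicitly iota x = sum over b of g(x,b) b.\<close>
definition iota :: "('a::euclidean_space \<Rightarrow> 'a \<Rightarrow> real) \<Rightarrow> 'a set \<Rightarrow> 'a \<Rightarrow> 'a" where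
  "iota g B x = (\<Sum>b\<in>B. g x b *\<^sub>R b)"

definition jmap :: "('a::euclidean_space \<Rightarrow> 'a \<Rightarrow> real) \<Rightarrow> ('a \<Rightarrow> 'a \<Rightarrow> 'a) \<Rightarrow> 'a set \<Rightarrow> 'a \<Rightarrow> 'a \<Rightarrow> 'a" where
  "jmap g br B y = iota g B \<circ> Jmap g br (iota g B y)"

definition pH_type :: "('a::euclidean_space \<Rightarrow> 'a \<Rightarrow> real) \<Rightarrow> ('a \<Rightarrow> 'a \<Rightarrow> 'a) \<Rightarrow> 'a set \<Rightarrow> bool" where
  "pH_type g br B \<longleftrightarrow> (\<forall>z\<in>center br. \<forall>x\<in>orth_compl g (center br).
     jmap g br B z (jmap g br B z x) = - g z (iota g B z) *\<^sub>R x)"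

end

theory Submission
  imports Defs
begin

text \<open>Fix a nonzero x \<in> E and consider L z = j(z) x for z \<in> Z. If L z = a x, then applying j(z)
once more gives a^2 x = j(z)^2 x = -\<langle>z,z\<rangle> x, which forces a = 0 and z = 0 because the
center is positive definite. Hence L is injective and x \<notin> L(Z), so E contains the
(dim Z + 1)-dimensional space L(Z) + \<real>x. On the center \<iota> is the identity, so the pH-condition
says exactly j(z)^2 = -\<langle>z,z\<rangle> on E.\<close>

lemma dim_add_one_le_of_square_negative:
  fixes j :: "'a::euclidean_space \<Rightarrow> 'b::euclidean_space \<Rightarrow> 'b" and q :: "'a \<Rightarrow> real"
  assumes Z: "subspace Z" and x: "x \<in> E" "x \<noteq> 0"
    and lin_left: "linear (\<lambda>z. j z x)" and lin: "\<And>z. linear (j z)"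
    and maps: "\<And>z. z \<in> Z \<Longrightarrow> j z x \<in> E"
    and square: "\<And>z. z \<in> Z \<Longrightarrow> j z (j z x) = - q z *\<^sub>R x"
    and pos: "\<And>z. z \<in> Z \<Longrightarrow> z \<noteq> 0 \<Longrightarrow> q z > 0"
  shows "dim Z + 1 \<le> dim E"
proof -
  define L where "L z = j z x" for z
  have linL: "linear L"
    using lin_left by (simp add: L_def[abs_def])
  have eigen: "z = 0 \<and> a = 0" if "z \<in> Z" "L z = a *\<^sub>R x" for z a
  proof -
    have "(a * a) *\<^sub>R x = - q z *\<^sub>R x"
      using square[OF \<open>z \<in> Z\<close>] that(2) linear_cmul[OF lin[of z]] by (simp add: L_def)
    then have "(a * a + q z) *\<^sub>R x = 0"
      by (simp add: scaleR_add_left)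
    then have "a * a + q z = 0"
      using \<open>x \<noteq> 0\<close> by simp
    then have "z = 0"
      using pos[OF \<open>z \<in> Z\<close>] zero_le_square[of a] by force
    then show ?thesis
      using that(2) \<open>x \<noteq> 0\<close> linear_0[OF linL] by simp
  qed
  have "inj_on L (span Z)"
    unfolding span_eq_iff[THEN iffD2, OF Z]
  proof (rule inj_onI)
    fix z w assume "z \<in> Z" "w \<in> Z" "L z = L w"
    then have "L (z - w) = 0 *\<^sub>R x"
      by (simp add: linear_diff[OF linL])
    then show "z = w"
      using eigen[of "z - w" 0] subspace_diff[OF Z \<open>z \<in> Z\<close> \<open>w \<in> Z\<close>] by simp
  qed
  then have dimL: "dim (L ` Z) = dim Z"
    using dim_image_eq[OF linL] by blast
  have "x \<notin> span (L ` Z)"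
  proof
    assume "x \<in> span (L ` Z)"
    then obtain z where "z \<in> Z" "L z = 1 *\<^sub>R x"
      using span_eq_iff[THEN iffD2, OF linear_subspace_image[OF linL Z]] by auto
    then show False
      using eigen[of z 1] by simp
  qed
  then have "dim Z + 1 = dim (insert x (L ` Z))"
    by (simp add: dim_insert dimL)
  also have "\<dots> \<le> dim E"
    using x maps by (intro dim_subset) (auto simp: L_def)
  finally show ?thesis .
qed

lemma bilinear_alternating_antisym:
  assumes "bilinear br" and "\<And>x. br x x = 0"
  shows "br x y = - br y x"
proof -
  have "br (x + y) (x + y) = br x x + br x y + (br y x + br y y)"
    using assms(1) by (simp add: bilinear_ladd bilinear_radd)
  then have "br x y + br y x = 0"
    using assms(2) by simp
  then show ?thesis
    by (simp add: eq_neg_iff_add_eq_0)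
qed

lemma subspace_center: "bilinear br \<Longrightarrow> subspace (center br)"
  unfolding subspace_def center_def by (simp add: bilinear_lzero bilinear_ladd bilinear_lmul)

lemma subspace_orth_compl: "bilinear g \<Longrightarrow> subspace (orth_compl g S)"
  unfolding subspace_def orth_compl_def by (simp add: bilinear_lzero bilinear_ladd bilinear_lmul)

lemma center_ne_UNIV: "two_step_nilpotent br \<Longrightarrow> center br \<noteq> UNIV"
  by (auto simp: two_step_nilpotent_def center_def)

lemma orth_compl_nontrivial:
  assumes "adapted_orthonormal_basis g Z E B" and "subspace Z" and "Z \<noteq> UNIV"
  obtains x where "x \<in> E" and "x \<noteq> 0"
proof -
  have "\<not> B \<subseteq> Z"
    using assms span_minimal[of B Z] by (auto simp: adapted_orthonormal_basis_def)
  then obtain b where "b \<in> B" "b \<notin> Z"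
    by blast
  moreover have "0 \<notin> B"
    using assms(1) dependent_zero by (auto simp: adapted_orthonormal_basis_def)
  ultimately have "b \<in> E" "b \<noteq> 0"
    using assms(1) by (auto simp: adapted_orthonormal_basis_def)
  then show ?thesis
    by (rule that)
qed

lemma iota_mem_subspace:
  assumes "subspace S" and "\<And>b. b \<in> B \<Longrightarrow> g v b \<noteq> 0 \<Longrightarrow> b \<in> S"
  shows "iota g B v \<in> S"
  unfolding iota_def
proof (rule subspace_sum[OF assms(1)])
  fix b assume "b \<in> B"
  then show "g v b *\<^sub>R b \<in> S"
    using assms by (cases "g v b = 0") (simp_all add: subspace_0 subspace_scale)
qed

context
  fixes g :: "'a::euclidean_space \<Rightarrow> 'a \<Rightarrow> real" and B :: "'a set"
  assumes bil: "bilinear g" and sym: "\<And>x y. g x y = g y x"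
    and fin: "finite B" and spans: "span B = UNIV"
    and unit: "\<And>b. b \<in> B \<Longrightarrow> g b b = 1 \<or> g b b = -1"
    and orth: "\<And>b c. b \<in> B \<Longrightarrow> c \<in> B \<Longrightarrow> b \<noteq> c \<Longrightarrow> g b c = 0"
begin

lemma orthonormal_expansion: "v = (\<Sum>b\<in>B. (g b b * g v b) *\<^sub>R b)"
proof -
  obtain c where v: "v = (\<Sum>b\<in>B. c b *\<^sub>R b)"
    using span_finite[OF fin] spans by auto
  have "g b b * g v b = c b" if "b \<in> B" for b
  proof -
    have lin: "linear (\<lambda>u. g u b)"
      using bil by (simp add: bilinear_def)
    have "g v b = (\<Sum>d\<in>B. c d * g d b)"
      unfolding v by (simp add: linear_sum[OF lin] linear_cmul[OF lin])
    also have "\<dots> = c b * g b b"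
      using fin that orth by (subst sum.remove) (auto intro: sum.neutral)
    finally show ?thesis
      using unit[OF that] by auto
  qed
  then show ?thesis
    unfolding v by (intro sum.cong) auto
qed

lemma orthonormal_eqI:
  assumes "\<And>w. g u w = g v w"
  shows "u = v"
proof -
  have "\<And>w. g (u - v) w = 0"
    using assms by (simp add: bilinear_lsub[OF bil])
  then have "u - v = 0"
    by (subst orthonormal_expansion) simp
  then show ?thesis
    by simp
qed

lemma Jmap_adjoint:
  assumes "bilinear br"
  shows "g (Jmap g br y x) w = g y (br x w)"
proof -
  define v where "v = (\<Sum>b\<in>B. (g b b * g y (br x b)) *\<^sub>R b)"
  have "linear (br x)" "linear (g y)"
    using assms bil by (simp_all add: bilinear_def)
  then have lin: "linear (\<lambda>w. g y (br x w))"
    using linear_compose by (auto simp: o_def)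
  have v: "g v w = g y (br x w)" for w
  proof -
    have lin_g: "linear (\<lambda>u. g u w)"
      using bil by (simp add: bilinear_def)
    have "g v w = (\<Sum>b\<in>B. (g b b * g y (br x b)) * g b w)"
      unfolding v_def by (simp add: linear_sum[OF lin_g] linear_cmul[OF lin_g])
    also have "\<dots> = (\<Sum>b\<in>B. (g b b * g w b) * g y (br x b))"
      by (intro sum.cong refl) (simp add: sym[of _ w])
    also have "\<dots> = g y (br x (\<Sum>b\<in>B. (g b b * g w b) *\<^sub>R b))"
      by (simp add: linear_sum[OF lin] linear_cmul[OF lin])
    finally show ?thesis
      using orthonormal_expansion[of w, symmetric] by simp
  qed
  have "Jmap g br y x = v"
    unfolding Jmap_def
  proof (rule the_equality)
    show "\<forall>w. g v w = g y (br x w)"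
      using v by simp
    show "u = v" if "\<forall>w. g u w = g y (br x w)" for u
      using that v by (intro orthonormal_eqI) simp
  qed
  then show ?thesis
    using v by simp
qed

lemma linear_Jmap_left: "bilinear br \<Longrightarrow> linear (\<lambda>y. Jmap g br y x)"
  by (intro linearI orthonormal_eqI)
    (simp_all add: Jmap_adjoint bilinear_ladd[OF bil] bilinear_lmul[OF bil])

lemma linear_Jmap: "bilinear br \<Longrightarrow> linear (Jmap g br y)"
  by (intro linearI orthonormal_eqI)
    (simp_all add: Jmap_adjoint bilinear_ladd bilinear_lmul bilinear_radd[OF bil] bilinear_rmul[OF bil]
      bilinear_ladd[OF bil] bilinear_lmul[OF bil])

lemma Jmap_mem_orth_compl_center:
  assumes "bilinear br" and "\<And>x. br x x = 0"
  shows "Jmap g br y x \<in> orth_compl g (center br)"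
  unfolding orth_compl_def
proof (intro CollectI ballI)
  fix z assume "z \<in> center br"
  then have "br x z = 0"
    using bilinear_alternating_antisym[OF assms, of x z] by (simp add: center_def)
  then show "g (Jmap g br y x) z = 0"
    by (simp add: Jmap_adjoint[OF assms(1)] bilinear_rzero[OF bil])
qed

lemma linear_iota: "linear (iota g B)"
  by (rule linearI) (simp_all add: iota_def bilinear_ladd[OF bil] bilinear_lmul[OF bil]
      scaleR_add_left sum.distrib scaleR_sum_right)

text \<open>On a positive definite Z the involution is the identity: every basis vector
that pairs nontrivially with Z lies in Z, where it has square 1.\<close>

lemma iota_eq_self:
  assumes adapted: "\<And>b. b \<in> B \<Longrightarrow> b \<in> Z \<or> b \<in> orth_compl g Z"
    and pos: "\<And>z. z \<in> Z \<Longrightarrow> z \<noteq> 0 \<Longrightarrow> g z z > 0" and "z \<in> Z"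
  shows "iota g B z = z"
proof -
  have "g b b * g z b = g z b" if "b \<in> B" for b
  proof (cases "b \<in> Z")
    case True
    moreover have "b \<noteq> 0"
      using unit[OF \<open>b \<in> B\<close>] by (auto simp: bilinear_lzero[OF bil])
    ultimately show ?thesis
      using pos unit[OF \<open>b \<in> B\<close>] by force
  next
    case False
    then show ?thesis
      using adapted[OF \<open>b \<in> B\<close>] \<open>z \<in> Z\<close> sym by (auto simp: orth_compl_def)
  qed
  then have "iota g B z = (\<Sum>b\<in>B. (g b b * g z b) *\<^sub>R b)"
    unfolding iota_def by (intro sum.cong) auto
  then show ?thesis
    using orthonormal_expansion[of z, symmetric] by simp
qed

lemma linear_jmap_left: "bilinear br \<Longrightarrow> linear (\<lambda>z. jmap g br B z x)"
  using linear_compose[OF linear_compose[OF linear_iota linear_Jmap_left] linear_iota]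
  by (simp add: jmap_def o_def)

lemma linear_jmap: "bilinear br \<Longrightarrow> linear (jmap g br B z)"
  using linear_compose[OF linear_Jmap linear_iota] by (simp add: jmap_def o_def)

lemma jmap_mem_orth_compl_center:
  assumes "bilinear br" and "\<And>x. br x x = 0"
    and adapted: "\<And>b. b \<in> B \<Longrightarrow> b \<in> center br \<or> b \<in> orth_compl g (center br)"
  shows "jmap g br B z x \<in> orth_compl g (center br)"
  unfolding jmap_def o_def
proof (rule iota_mem_subspace[OF subspace_orth_compl[OF bil]])
  fix b assume "b \<in> B" "g (Jmap g br (iota g B z) x) b \<noteq> 0"
  then show "b \<in> orth_compl g (center br)"
    using adapted Jmap_mem_orth_compl_center[OF assms(1,2)] by (auto simp: orth_compl_def)
qed

end

theorem mainTheorem2: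
  fixes br :: "'a::euclidean_space \<Rightarrow> 'a \<Rightarrow> 'a" and g :: "'a \<Rightarrow> 'a \<Rightarrow> real" and B :: "'a set"
  assumes "lie_algebra br"
    and "two_step_nilpotent br"
    and "lorentzian g"
    and "\<forall>z\<in>center br. z \<noteq> 0 \<longrightarrow> g z z > 0"
    and "adapted_orthonormal_basis g (center br) (orth_compl g (center br)) B"
    and "pH_type g br B"
  shows "dim (center br) + 1 \<le> dim (orth_compl g (center br))"
proof -
  have br: "bilinear br" "\<And>x. br x x = 0"
    using assms(1) by (auto simp: lie_algebra_def)
  have g: "bilinear g" "\<And>x y. g x y = g y x"
    using assms(3) by (auto simp: lorentzian_def)
  note basis = assms(5)[unfolded adapted_orthonormal_basis_def]
  obtain x where x: "x \<in> orth_compl g (center br)" "x \<noteq> 0"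
    using orth_compl_nontrivial[OF assms(5) subspace_center[OF br(1)] center_ne_UNIV[OF assms(2)]] .
  have "iota g B z = z" if "z \<in> center br" for z
    using basis assms(4) that by (intro iota_eq_self[OF g]) auto
  then have square: "jmap g br B z (jmap g br B z x) = - g z z *\<^sub>R x" if "z \<in> center br" for z
    using assms(6) x(1) that by (simp add: pH_type_def)
  show ?thesis
    using assms(4) basis x br g square
    by (intro dim_add_one_le_of_square_negative[where j = "jmap g br B" and q = "\<lambda>z. g z z"]
        subspace_center linear_jmap_left linear_jmap
        jmap_mem_orth_compl_center) auto
qed

end
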